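(* For all integers $\alpha\ge2$, $0\le m\le\alpha$ and $n\in\mathbb Z$, $$C_{\alpha,m,n}=C_{\alpha-1,m,n}+y_{2\alpha-1,n}\,C_{\alpha-1,m-1,n}+y_{2\alpha-2,n}\,C_{\alpha-2,m-1,n}.$$ Moreover $C_{\alpha,0,n}=1$ for all $\alpha\ge0$.
   Context: Let $(r_{1,n})_{n\in\mathbb Z}$ be a sequence in a field $K$, set $r_{0,n}=1$ and $r_{\alpha,n}=\det_{1\le i,j\le\alpha}(r_{1,n+i+j-1-\alpha})$ for $\alpha\ge1$, and assume all $r_{\alpha,n}$ are nonzero. For $p\ge0$ let $s_p(j)=j$ if $j\le p$ and $s_p(j)=j+1$ if $j>p$; for $\alpha\ge1$, $0\le m\le \alpha$ let $c_{\alpha,m,n}=\det_{1\le i,j\le\alpha}(r_{1,n+i+s_{\alpha-m}(j)-\alpha-1})$, $c_{0,0,n}=1$, and $c_{\alpha,m,n}=0$ if $m<0$ or $m>\alpha$. Define $v_{\alpha,n}=r_{\alpha,n}/r_{\alpha-1,n}$ ($\alpha\ge1$), the weights $$y_{2\alpha-1,n}=\frac{v_{\alpha,n+1}}{v_{\alpha,n}}=\frac{r_{\alpha-1,n}r_{\alpha,n+1}}{r_{\alpha,n}r_{\alpha-1,n+1}},\qquad y_{2\alpha,n}=\frac{v_{\alpha+1,n+1}}{v_{\alpha,n}}=\frac{r_{\alpha-1,n}r_{\alpha+1,n+1}}{r_{\alpha,n}r_{\alpha,n+1}}\quad(\alpha\ge1),$$ and $C_{\alpha,m,n}=c_{\alpha,m,n}/(v_{1,n}v_{2,n}\cdots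 v_{\alpha,n})$ (with $C_{0,0,n}=1$ and $C_{\alpha,m,n}=0$ if $m<0$ or $m>\alpha$). *)

theory Defs
  imports "Jordan_Normal_Form.Determinant"
begin

text \<open>Hankel-type determinants. Matrices are 0-indexed in JNF; the paper's
  index i (1..alpha) corresponds to i'+1.\<close>

definition s_idx :: "nat \<Rightarrow> nat \<Rightarrow> nat" where
  "s_idx p j = (if j \<le> p then j else j + 1)"

definition rdet :: "(int \<Rightarrow> 'a::field) \<Rightarrow> nat \<Rightarrow> int \<Rightarrow> 'a" where
  "rdet r1 \<alpha> n = (if \<alpha> = 0 then 1 else
     det (mat \<alpha> \<alpha> (\<lambda>(i,j). r1 (n + int (i+1) + int (j+1) - 1 - int \<alpha>))))"

definition cdet :: "(int \<Rightarrow> 'a::field) \<Rightarrow> nat \<Rightarrow> int \<Rightarrow> int \<Rightarrow> 'a" where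
  "cdet r1 \<alpha> m n = (if m < 0 \<or> m > int \<alpha> then 0
     else if \<alpha> = 0 then 1
     else det (mat \<alpha> \<alpha> (\<lambda>(i,j). r1 (n + int (i+1)
              + int (s_idx (\<alpha> - nat m) (j+1)) - int \<alpha> - 1))))"

definition vq :: "(int \<Rightarrow> 'a::field) \<Rightarrow> nat \<Rightarrow> int \<Rightarrow> 'a" where
  "vq r1 \<alpha> n = rdet r1 \<alpha> n / rdet r1 (\<alpha> - 1) n"

(* y_{2a-1,n} = v_{a,n+1}/v_{a,n},  y_{2a,n} = v_{a+1,n+1}/v_{a,n}  (a >= 1) *)
definition yw :: "(int \<Rightarrow> 'a::field) \<Rightarrow> nat \<Rightarrow> int \<Rightarrow> 'a" where
  "yw r1 k n = (if odd k then vq r1 ((k+1) div 2) (n+1) / vq r1 ((k+1) div 2) n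
                else vq r1 (k div 2 + 1) (n+1) / vq r1 (k div 2) n)"

definition Cn :: "(int \<Rightarrow> 'a::field) \<Rightarrow> nat \<Rightarrow> int \<Rightarrow> int \<Rightarrow> 'a" where
  "Cn r1 \<alpha> m n = cdet r1 \<alpha> m n / (\<Prod>k=1..\<alpha>. vq r1 k n)"

end

theory Submission
  imports Defs
begin

text \<open>
  Let M be the \<open>\<alpha> \<times> (\<alpha>+1)\<close> Hankel array \<open>M i j = r1 (n + i + j + 1 - \<alpha>)\<close> (0-indexed) and
  \<open>D j\<close> its maximal minor with column j deleted.  Then \<open>c\<^sub>\<alpha>\<^sub>,\<^sub>m\<^sub>,\<^sub>n = D (\<alpha>-m)\<close>,
  \<open>r\<^sub>\<alpha>\<^sub>,\<^sub>n = D \<alpha>\<close> and \<open>r\<^sub>\<alpha>\<^sub>,\<^sub>n\<^sub>+\<^sub>1 = D 0\<close>.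

  The first part works over any commutative ring: it proves the Grassmann--Pluecker relation
  \<open>\<Sum>j. (-1)^j * D\<^sub>X j * det [X(g \<cdot>, j) | W] = 0\<close> for a \<open>\<beta> \<times> (\<beta>+1)\<close> array X and a
  \<open>(\<beta>-1) \<times> (\<beta>-2)\<close> array W, and its three-term form when all but three columns of X
  reappear among the columns of W.  Applied to M with two choices of W (rows 1.. of M, and
  M bordered by a unit column) it gives two three-term relations between r's, c's and one
  auxiliary minor of M; eliminating that minor yields the polynomial recurrence
  \<open>r\<^sub>\<alpha>\<^sub>-\<^sub>1\<^sub>,\<^sub>n r\<^sub>\<alpha>\<^sub>-\<^sub>1\<^sub>,\<^sub>n\<^sub>+\<^sub>1 c\<^sub>\<alpha>\<^sub>,\<^sub>m = r\<^sub>\<alpha>\<^sub>,\<^sub>n r\<^sub>\<alpha>\<^sub>-\<^sub>1\<^sub>,\<^sub>n\<^sub>+\<^sub>1 c\<^sub>\<alpha>\<^sub>-\<^sub>1\<^sub>,\<^sub>m + r\<^sub>\<alpha>\<^sub>-\<^sub>1\<^sub>,\<^sub>n r\<^sub>\<alpha>\<^sub>,\<^sub>n\<^sub>+\<^sub>1 c\<^sub>\<alpha>\<^sub>-\<^sub>1\<^sub>,\<^sub>m\<^sub>-\<^sub>1 + r\<^sub>\<alpha>\<^sub>,\<^sub>n r\<^sub>\<alpha>\<^sub>,\<^sub>n\<^sub>+\<^sub>1 c\<^sub>\<alpha>\<^sub>-\<^sub>2\<^sub>,\<^sub>m\<^sub>-\<^sub>1\<close>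
  (the boundary cases \<open>m = 0\<close>, \<open>m = \<alpha>\<close> are immediate).  Finally \<open>v\<^sub>1 \<cdots> v\<^sub>\<alpha>\<close> telescopes to
  \<open>r\<^sub>\<alpha>\<^sub>,\<^sub>n\<close>, so \<open>C = c / r\<close>, and dividing the recurrence by \<open>r\<^sub>\<alpha>\<^sub>,\<^sub>n r\<^sub>\<alpha>\<^sub>-\<^sub>1\<^sub>,\<^sub>n r\<^sub>\<alpha>\<^sub>-\<^sub>1\<^sub>,\<^sub>n\<^sub>+\<^sub>1\<close> gives the theorem.
\<close>

definition col_minor :: "(nat \<Rightarrow> nat \<Rightarrow> 'a::comm_ring_1) \<Rightarrow> nat \<Rightarrow> nat \<Rightarrow> 'a" where
  "col_minor X \<beta> j = det (mat \<beta> \<beta> (\<lambda>(i,t). X i (insert_index j t)))"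

definition ins_col :: "nat \<Rightarrow> (nat \<Rightarrow> nat \<Rightarrow> 'a) \<Rightarrow> nat \<Rightarrow> (nat \<Rightarrow> 'a) \<Rightarrow> 'a mat" where
  "ins_col \<beta> W p x = mat \<beta> \<beta> (\<lambda>(i,t). if t < p then W i t else if t = p then x i else W i (t - 1))"

text \<open>Laplace expansion of \<open>det [x | W]\<close> along its first column; it is linear in x,
  which is what makes the Pluecker relation a simple exchange of sums.\<close>

definition det_with_col :: "(nat \<Rightarrow> nat \<Rightarrow> 'a::comm_ring_1) \<Rightarrow> nat \<Rightarrow> (nat \<Rightarrow> 'a) \<Rightarrow> 'a" where
  "det_with_col W \<beta> x =
     (\<Sum>i<\<beta>. (-1)^i * x i * det (mat (\<beta>-1) (\<beta>-1) (\<lambda>(i',t). W (insert_index i i') t)))"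

lemma det_ins_col:
  fixes W :: "nat \<Rightarrow> nat \<Rightarrow> 'a::comm_ring_1"
  assumes p: "p < \<beta>"
  shows "det (ins_col \<beta> W p x) = (-1)^p * det_with_col W \<beta> x"
proof -
  let ?A = "ins_col \<beta> W p x"
  let ?minor = "\<lambda>i. det (mat (\<beta>-1) (\<beta>-1) (\<lambda>(i',t). W (insert_index i i') t))"
  have A: "?A \<in> carrier_mat \<beta> \<beta>" by (simp add: ins_col_def)
  have "det ?A = (\<Sum>i<\<beta>. ?A $$ (i,p) * cofactor ?A i p)"
    by (rule laplace_expansion_column[OF A p])
  also have "\<dots> = (\<Sum>i<\<beta>. (-1)^p * ((-1)^i * x i * ?minor i))"
  proof (rule sum.cong[OF refl])
    fix i assume i: "i \<in> {..<\<beta>}"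
    have "mat_delete ?A i p = mat (\<beta>-1) (\<beta>-1) (\<lambda>(i',t). W (insert_index i i') t)"
      by (rule eq_matI) (auto simp: mat_delete_def ins_col_def insert_index_def)
    then show "?A $$ (i,p) * cofactor ?A i p = (-1)^p * ((-1)^i * x i * ?minor i)"
      unfolding cofactor_def using i p by (simp add: ins_col_def power_add)
  qed
  also have "\<dots> = (-1)^p * det_with_col W \<beta> x"
    unfolding det_with_col_def by (simp add: sum_distrib_left)
  finally show ?thesis .
qed

lemma det_with_col_as_det:
  "p < \<beta> \<Longrightarrow> det_with_col W \<beta> x = (-1)^p * det (ins_col \<beta> W p x)"
  by (simp add: det_ins_col)

lemma det_with_col_repeated:
  fixes W :: "nat \<Rightarrow> nat \<Rightarrow> 'a::comm_ring_1"
  assumes t: "t < \<beta> - 1" and x: "\<And>i. i < \<beta> \<Longrightarrow> x i = W i t"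
  shows "det_with_col W \<beta> x = 0"
proof -
  have "det (ins_col \<beta> W 0 x) = 0"
  proof (rule det_identical_columns[of _ \<beta> 0 "Suc t"])
    show "col (ins_col \<beta> W 0 x) 0 = col (ins_col \<beta> W 0 x) (Suc t)"
      using t x by (auto simp: ins_col_def intro!: eq_vecI)
  qed (use t in \<open>auto simp: ins_col_def\<close>)
  then show ?thesis using det_ins_col[of 0 \<beta> W x] t by simp
qed

lemma det_unit_first_col:
  fixes A :: "'a::comm_ring_1 mat"
  assumes A: "A \<in> carrier_mat (Suc b) (Suc b)"
    and e0: "\<And>i. i < Suc b \<Longrightarrow> A $$ (i,0) = (if i = 0 then 1 else 0)"
  shows "det A = det (mat b b (\<lambda>(i,t). A $$ (Suc i, Suc t)))"
proof -
  have "det A = (\<Sum>i<Suc b. A $$ (i,0) * cofactor A i 0)"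
    by (rule laplace_expansion_column[OF A]) simp
  also have "\<dots> = (\<Sum>i<Suc b. if i = 0 then cofactor A i 0 else 0)"
    by (rule sum.cong) (auto simp: e0)
  also have "\<dots> = cofactor A 0 0" by simp
  also have "\<dots> = det (mat b b (\<lambda>(i,t). A $$ (Suc i, Suc t)))"
    unfolding cofactor_def using A by (auto simp: mat_delete_def intro!: arg_cong[where f=det] eq_matI)
  finally show ?thesis .
qed

lemma col_minor_unit_col0:
  fixes X :: "nat \<Rightarrow> nat \<Rightarrow> 'a::comm_ring_1"
  assumes j: "1 \<le> j" and e0: "\<And>i. X i 0 = (if i = 0 then 1 else 0)"
  shows "col_minor X (Suc b) j = det (mat b b (\<lambda>(i,t). X (Suc i) (insert_index j (Suc t))))"
  unfolding col_minor_def
  by (subst det_unit_first_col) (use j e0 in \<open>auto simp: insert_index_def intro!: arg_cong[where f=det] eq_matI\<close>)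

lemma det_ins_col_unit:
  fixes W :: "nat \<Rightarrow> nat \<Rightarrow> 'a::comm_ring_1"
  shows "det (ins_col (Suc b) W 0 (\<lambda>i. if i = 0 then 1 else 0)) = det (mat b b (\<lambda>(i,t). W (Suc i) t))"
  by (subst det_unit_first_col) (auto simp: ins_col_def intro!: arg_cong[where f=det] eq_matI)


text \<open>Expanding the \<open>(\<beta>+1) \<times> (\<beta>+1)\<close> matrix whose first row repeats row \<open>i0\<close> of X along
  that row: the alternating sum of \<open>X i0 j\<close> against the column minors is zero.\<close>

lemma laplace_repeated_row:
  fixes X :: "nat \<Rightarrow> nat \<Rightarrow> 'a::comm_ring_1"
  assumes i0: "i0 < \<beta>"
  shows "(\<Sum>j\<le>\<beta>. (-1)^j * X i0 j * col_minor X \<beta> j) = 0"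
proof -
  define N where "N = mat (Suc \<beta>) (Suc \<beta>) (\<lambda>(i,j). if i = 0 then X i0 j else X (i-1) j)"
  have N: "N \<in> carrier_mat (Suc \<beta>) (Suc \<beta>)" by (simp add: N_def)
  have "det N = 0"
    by (rule det_identical_rows[OF N, of 0 "Suc i0"]) (use i0 in \<open>auto simp: N_def intro!: eq_vecI\<close>)
  moreover have "det N = (\<Sum>j<Suc \<beta>. N $$ (0,j) * cofactor N 0 j)"
    by (rule laplace_expansion_row[OF N]) simp
  moreover have "\<dots> = (\<Sum>j\<le>\<beta>. (-1)^j * X i0 j * col_minor X \<beta> j)"
    unfolding lessThan_Suc_atMost[symmetric]
  proof (rule sum.cong[OF refl])
    fix j assume j: "j \<in> {..<Suc \<beta>}"
    have "mat_delete N 0 j = mat \<beta> \<beta> (\<lambda>(i,t). X i (insert_index j t))"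
      by (rule eq_matI) (auto simp: mat_delete_def N_def insert_index_def)
    then show "N $$ (0,j) * cofactor N 0 j = (-1)^j * X i0 j * col_minor X \<beta> j"
      unfolding cofactor_def col_minor_def using j by (simp add: N_def)
  qed
  ultimately show ?thesis by simp
qed

text \<open>Grassmann--Pluecker relation: combine the previous identity over the rows of W.\<close>

lemma plucker_relation:
  fixes X :: "nat \<Rightarrow> nat \<Rightarrow> 'a::comm_ring_1"
  assumes g: "\<And>i. i < \<gamma> \<Longrightarrow> g i < \<beta>"
  shows "(\<Sum>j\<le>\<beta>. (-1)^j * col_minor X \<beta> j * det_with_col W \<gamma> (\<lambda>i. X (g i) j)) = 0"
proof -
  define E where "E i = det (mat (\<gamma>-1) (\<gamma>-1) (\<lambda>(i',t). W (insert_index i i') t))" for i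
  have "(\<Sum>j\<le>\<beta>. (-1)^j * col_minor X \<beta> j * det_with_col W \<gamma> (\<lambda>i. X (g i) j))
      = (\<Sum>j\<le>\<beta>. \<Sum>i<\<gamma>. (-1)^i * E i * ((-1)^j * X (g i) j * col_minor X \<beta> j))"
    unfolding det_with_col_def E_def[symmetric] by (simp add: sum_distrib_left algebra_simps)
  also have "\<dots> = (\<Sum>i<\<gamma>. (-1)^i * E i * (\<Sum>j\<le>\<beta>. (-1)^j * X (g i) j * col_minor X \<beta> j))"
    by (subst sum.swap) (simp add: sum_distrib_left)
  also have "\<dots> = 0"
    using laplace_repeated_row[OF g, of _ X] by simp
  finally show ?thesis .
qed

lemma plucker_three_term:
  fixes X W :: "nat \<Rightarrow> nat \<Rightarrow> 'a::comm_ring_1"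
  assumes k: "0 < k" "k < \<beta>"
    and g: "\<And>i. i < \<beta> - 1 \<Longrightarrow> g i < \<beta>"
    and repeated: "\<And>j. j \<le> \<beta> \<Longrightarrow> j \<noteq> 0 \<Longrightarrow> j \<noteq> k \<Longrightarrow> j \<noteq> \<beta> \<Longrightarrow>
                     \<exists>t < \<beta> - 2. \<forall>i < \<beta> - 1. X (g i) j = W i t"
  shows "col_minor X \<beta> 0 * det (ins_col (\<beta>-1) W 0 (\<lambda>i. X (g i) 0))
       - col_minor X \<beta> k * det (ins_col (\<beta>-1) W (k-1) (\<lambda>i. X (g i) k))
       + col_minor X \<beta> \<beta> * det (ins_col (\<beta>-1) W (\<beta>-2) (\<lambda>i. X (g i) \<beta>)) = 0"
proof -
  let ?x = "\<lambda>j i. X (g i) j"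
  let ?f = "\<lambda>j. (-1)^j * col_minor X \<beta> j * det_with_col W (\<beta>-1) (?x j)"
  have \<beta>2: "2 \<le> \<beta>" using k by simp
  have sign_k: "(-1::'a)^k * (-1)^(k-1) = -1" using k by (cases k) auto
  have sign_\<beta>: "(-1::'a)^\<beta> * (-1)^(\<beta>-2) = 1"
  proof -
    obtain b where "\<beta> = Suc (Suc b)" using \<beta>2 by (metis add_2_eq_Suc le_Suc_ex)
    then show ?thesis by simp
  qed
  have "(\<Sum>j\<le>\<beta>. ?f j) = (\<Sum>j\<in>{0,k,\<beta>}. ?f j)"
  proof (rule sum.mono_neutral_right)
    show "\<forall>j\<in>{..\<beta>} - {0,k,\<beta>}. ?f j = 0"
    proof
      fix j assume "j \<in> {..\<beta>} - {0,k,\<beta>}"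
      then have "j \<le> \<beta>" "j \<noteq> 0" "j \<noteq> k" "j \<noteq> \<beta>" by auto
      then obtain t where "t < \<beta> - 2" "\<forall>i < \<beta> - 1. ?x j i = W i t"
        using repeated by blast
      then have "det_with_col W (\<beta>-1) (?x j) = 0"
        by (intro det_with_col_repeated[of t]) auto
      then show "?f j = 0" by simp
    qed
  qed (use k in auto)
  also have "\<dots> = ?f 0 + ?f k + ?f \<beta>" using k by (simp add: add.assoc)
  finally have "?f 0 + ?f k + ?f \<beta> = 0" using plucker_relation[OF g, where X=X and W=W] by simp
  moreover have "?f 0 = col_minor X \<beta> 0 * det (ins_col (\<beta>-1) W 0 (?x 0))"
    using det_with_col_as_det[of 0 "\<beta>-1" W "?x 0"] \<beta>2 by simp
  moreover have "?f k = - (col_minor X \<beta> k * det (ins_col (\<beta>-1) W (k-1) (?x k)))"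
  proof -
    have "det_with_col W (\<beta>-1) (?x k) = (-1)^(k-1) * det (ins_col (\<beta>-1) W (k-1) (?x k))"
      by (rule det_with_col_as_det) (use k in simp)
    then have "?f k = ((-1)^k * (-1)^(k-1)) * (col_minor X \<beta> k * det (ins_col (\<beta>-1) W (k-1) (?x k)))"
      by (simp only: mult_ac)
    then show ?thesis by (simp only: sign_k mult_minus1)
  qed
  moreover have "?f \<beta> = col_minor X \<beta> \<beta> * det (ins_col (\<beta>-1) W (\<beta>-2) (?x \<beta>))"
  proof -
    have "det_with_col W (\<beta>-1) (?x \<beta>) = (-1)^(\<beta>-2) * det (ins_col (\<beta>-1) W (\<beta>-2) (?x \<beta>))"
      by (rule det_with_col_as_det) (use \<beta>2 in simp)
    then have "?f \<beta> = ((-1)^\<beta> * (-1)^(\<beta>-2)) * (col_minor X \<beta> \<beta> * det (ins_col (\<beta>-1) W (\<beta>-2) (?x \<beta>)))"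
      by (simp only: mult_ac)
    then show ?thesis by (simp only: sign_\<beta> mult_1)
  qed
  ultimately show ?thesis by simp
qed

definition hank :: "(int \<Rightarrow> 'a) \<Rightarrow> nat \<Rightarrow> int \<Rightarrow> nat \<Rightarrow> nat \<Rightarrow> 'a" where
  "hank r1 \<alpha> n i j = r1 (n + int i + int j + 1 - int \<alpha>)"

text \<open>The \<open>(\<alpha>-1) \<times> (\<alpha>-2)\<close> array of rows \<open>s .. s+\<alpha>-2\<close> of M and the columns other than
  \<open>0\<close>, \<open>k\<close> and \<open>\<alpha>\<close>; it plays the role of W in the three-term relation.\<close>

definition hank_sub :: "(int \<Rightarrow> 'a) \<Rightarrow> nat \<Rightarrow> int \<Rightarrow> nat \<Rightarrow> nat \<Rightarrow> nat \<Rightarrow> nat \<Rightarrow> 'a" where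
  "hank_sub r1 \<alpha> n k s i t = hank r1 \<alpha> n (i + s) (Suc (insert_index (k - 1) t))"

text \<open>Minor of M with row 0 and columns 0 and j deleted; for \<open>j = k\<close> this is the
  auxiliary quantity eliminated at the end.\<close>

definition hank_minor :: "(int \<Rightarrow> 'a::comm_ring_1) \<Rightarrow> nat \<Rightarrow> int \<Rightarrow> nat \<Rightarrow> 'a" where
  "hank_minor r1 \<alpha> n j =
     det (mat (\<alpha>-1) (\<alpha>-1) (\<lambda>(i,t). hank r1 \<alpha> n (Suc i) (insert_index j (Suc t))))"

lemma s_idx_Suc: "s_idx p (Suc t) = Suc (insert_index p t)"
  by (simp add: s_idx_def insert_index_def)

lemma cdet_as_col_minor:
  assumes "0 < \<alpha>" "k \<le> \<alpha>"
  shows "cdet r1 \<alpha> (int \<alpha> - int k) n = col_minor (hank r1 \<alpha> n) \<alpha> k"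
proof -
  have "\<alpha> - nat (int \<alpha> - int k) = k" using assms by auto
  then show ?thesis using assms unfolding cdet_def col_minor_def
    by (auto simp: s_idx_Suc hank_def intro!: arg_cong[where f=det] eq_matI arg_cong[where f=r1])
qed

lemma rdet_as_col_minor: "0 < \<alpha> \<Longrightarrow> rdet r1 \<alpha> n = col_minor (hank r1 \<alpha> n) \<alpha> \<alpha>"
  unfolding rdet_def col_minor_def
  by (auto simp: hank_def insert_index_def intro!: arg_cong[where f=det] eq_matI arg_cong[where f=r1])

lemma rdet_succ_as_col_minor: "0 < \<alpha> \<Longrightarrow> rdet r1 \<alpha> (n+1) = col_minor (hank r1 \<alpha> n) \<alpha> 0"
  unfolding rdet_def col_minor_def
  by (auto simp: hank_def insert_index_def intro!: arg_cong[where f=det] eq_matI arg_cong[where f=r1])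

text \<open>For fixed \<open>\<alpha> \<ge> 2\<close> and \<open>1 \<le> k < \<alpha>\<close> (i.e. \<open>m = \<alpha> - k\<close> strictly between 0 and \<open>\<alpha>\<close>)
  we derive two three-term relations and the recurrence for the c's.\<close>

context
  fixes r1 :: "int \<Rightarrow> 'a::field" and \<alpha> k :: nat and n :: int
  assumes \<alpha>2: "2 \<le> \<alpha>" and k_pos: "1 \<le> k" and k_less: "k < \<alpha>"
begin

lemma hank_sub_repeats:
  assumes "j \<le> \<alpha>" "j \<noteq> 0" "j \<noteq> k" "j \<noteq> \<alpha>"
  shows "\<exists>t < \<alpha> - 2. \<forall>i < \<alpha> - 1. hank r1 \<alpha> n (i + s) j = hank_sub r1 \<alpha> n k s i t"
proof (intro exI conjI allI impI)
  let ?t = "if j < k then j - 1 else j - 2"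
  show "?t < \<alpha> - 2" using assms k_pos k_less by auto
  show "hank r1 \<alpha> n (i + s) j = hank_sub r1 \<alpha> n k s i ?t" for i
    using assms k_pos by (auto simp: hank_sub_def insert_index_def intro!: arg_cong[where f="hank r1 \<alpha> n (i+s)"])
qed

lemma rdet_succ_as_hank_minor: "rdet r1 (\<alpha>-1) (n+1) = hank_minor r1 \<alpha> n \<alpha>"
  using \<alpha>2 unfolding rdet_def hank_minor_def
  by (auto simp: hank_def insert_index_def intro!: arg_cong[where f=det] eq_matI arg_cong[where f=r1])

lemma cdet_as_shifted_det:
  "cdet r1 (\<alpha>-1) (int \<alpha> - int k - 1) n
     = det (ins_col (\<alpha>-1) (hank_sub r1 \<alpha> n k 1) 0 (\<lambda>i. hank r1 \<alpha> n (Suc i) 0))"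
proof -
  have "(\<alpha>-1) - nat (int \<alpha> - int k - 1) = k" using \<alpha>2 k_pos k_less by auto
  then show ?thesis using \<alpha>2 k_pos k_less unfolding cdet_def
    by (auto simp: s_idx_def ins_col_def hank_sub_def hank_def insert_index_def
        intro!: arg_cong[where f=det] eq_matI arg_cong[where f=r1])
qed

lemma rdet_succ_as_shifted_det:
  "rdet r1 (\<alpha>-1) (n+1) = det (ins_col (\<alpha>-1) (hank_sub r1 \<alpha> n k 1) (k-1) (\<lambda>i. hank r1 \<alpha> n (Suc i) k))"
  using \<alpha>2 k_pos k_less unfolding rdet_def
  by (auto simp: ins_col_def hank_sub_def hank_def insert_index_def
      intro!: arg_cong[where f=det] eq_matI arg_cong[where f=r1])

lemma hank_minor_as_shifted_det:
  "hank_minor r1 \<alpha> n k = det (ins_col (\<alpha>-1) (hank_sub r1 \<alpha> n k 1) (\<alpha>-2) (\<lambda>i. hank r1 \<alpha> n (Suc i) \<alpha>))"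
  using \<alpha>2 k_pos k_less unfolding hank_minor_def
  by (auto simp: ins_col_def hank_sub_def hank_def insert_index_def
      intro!: arg_cong[where f=det] eq_matI arg_cong[where f=r1])

lemma rdet_as_bordered_det:
  "rdet r1 (\<alpha>-1) n = det (ins_col (\<alpha>-1) (hank_sub r1 \<alpha> n k 0) (k-1) (\<lambda>i. hank r1 \<alpha> n i k))"
  using \<alpha>2 k_pos k_less unfolding rdet_def
  by (auto simp: ins_col_def hank_sub_def hank_def insert_index_def
      intro!: arg_cong[where f=det] eq_matI arg_cong[where f=r1])

lemma cdet_as_bordered_det:
  "cdet r1 (\<alpha>-1) (int \<alpha> - int k) n = det (ins_col (\<alpha>-1) (hank_sub r1 \<alpha> n k 0) (\<alpha>-2) (\<lambda>i. hank r1 \<alpha> n i \<alpha>))"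
proof -
  have "(\<alpha>-1) - nat (int \<alpha> - int k) = k - 1" using \<alpha>2 k_pos k_less by auto
  then show ?thesis using \<alpha>2 k_pos k_less unfolding cdet_def
    by (auto simp: s_idx_def ins_col_def hank_sub_def hank_def insert_index_def
        intro!: arg_cong[where f=det] eq_matI arg_cong[where f=r1])
qed

lemma cdet_as_sub_minor:
  "cdet r1 (\<alpha>-2) (int \<alpha> - int k - 1) n = det (mat (\<alpha>-2) (\<alpha>-2) (\<lambda>(i,t). hank_sub r1 \<alpha> n k 0 (Suc i) t))"
proof (cases "\<alpha> = 2")
  case True
  then show ?thesis unfolding cdet_def using k_pos k_less by auto
next
  case False
  have "(\<alpha>-2) - nat (int \<alpha> - int k - 1) = k - 1" using \<alpha>2 k_pos k_less by auto
  then show ?thesis using False \<alpha>2 k_pos k_less unfolding cdet_def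
    by (auto simp: s_idx_def hank_sub_def hank_def insert_index_def
        intro!: arg_cong[where f=det] eq_matI arg_cong[where f=r1])
qed

text \<open>First relation: Pluecker relation for M with W formed from rows 1 .. of M.\<close>

lemma relation_shifted_rows:
  "rdet r1 \<alpha> (n+1) * cdet r1 (\<alpha>-1) (int \<alpha> - int k - 1) n
   - cdet r1 \<alpha> (int \<alpha> - int k) n * rdet r1 (\<alpha>-1) (n+1)
   + rdet r1 \<alpha> n * hank_minor r1 \<alpha> n k = 0"
proof -
  have "col_minor (hank r1 \<alpha> n) \<alpha> 0 * det (ins_col (\<alpha>-1) (hank_sub r1 \<alpha> n k 1) 0 (\<lambda>i. hank r1 \<alpha> n (Suc i) 0))
      - col_minor (hank r1 \<alpha> n) \<alpha> k * det (ins_col (\<alpha>-1) (hank_sub r1 \<alpha> n k 1) (k-1) (\<lambda>i. hank r1 \<alpha> n (Suc i) k))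
      + col_minor (hank r1 \<alpha> n) \<alpha> \<alpha> * det (ins_col (\<alpha>-1) (hank_sub r1 \<alpha> n k 1) (\<alpha>-2) (\<lambda>i. hank r1 \<alpha> n (Suc i) \<alpha>)) = 0"
    using hank_sub_repeats[where s=1] k_pos k_less
    by (intro plucker_three_term[where g=Suc]) auto
  moreover have "0 < \<alpha>" using \<alpha>2 by simp
  ultimately show ?thesis
    unfolding cdet_as_col_minor[OF \<open>0 < \<alpha>\<close> less_imp_le[OF k_less]]
      rdet_as_col_minor[OF \<open>0 < \<alpha>\<close>, where n=n] rdet_succ_as_col_minor[OF \<open>0 < \<alpha>\<close>]
      cdet_as_shifted_det rdet_succ_as_shifted_det hank_minor_as_shifted_det
    by simp
qed

text \<open>Second relation: Pluecker relation for M with its column 0 replaced by the unit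
  vector, and W formed from rows 0 .. of M.\<close>

lemma relation_bordered:
  "rdet r1 \<alpha> (n+1) * cdet r1 (\<alpha>-2) (int \<alpha> - int k - 1) n
   - hank_minor r1 \<alpha> n k * rdet r1 (\<alpha>-1) n
   + rdet r1 (\<alpha>-1) (n+1) * cdet r1 (\<alpha>-1) (int \<alpha> - int k) n = 0"
proof -
  define X where "X i j = (if j = 0 then (if i = 0 then 1 else 0) else hank r1 \<alpha> n i j)" for i j
  let ?W = "hank_sub r1 \<alpha> n k 0"
  have \<alpha>_Suc: "\<alpha> = Suc (\<alpha> - 1)" and \<alpha>_pos: "0 < \<alpha>" using \<alpha>2 by simp_all
  have "col_minor X \<alpha> 0 * det (ins_col (\<alpha>-1) ?W 0 (\<lambda>i. X i 0))
      - col_minor X \<alpha> k * det (ins_col (\<alpha>-1) ?W (k-1) (\<lambda>i. X i k))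
      + col_minor X \<alpha> \<alpha> * det (ins_col (\<alpha>-1) ?W (\<alpha>-2) (\<lambda>i. X i \<alpha>)) = 0"
    using hank_sub_repeats[where s=0] k_pos k_less
    by (intro plucker_three_term[where g="\<lambda>i. i"]) (auto simp: X_def)
  moreover have "col_minor X \<alpha> 0 = rdet r1 \<alpha> (n+1)"
    unfolding rdet_succ_as_col_minor[OF \<alpha>_pos]
    by (auto simp: col_minor_def X_def insert_index_def intro!: arg_cong[where f=det] eq_matI)
  moreover have "col_minor X \<alpha> j = hank_minor r1 \<alpha> n j" if "1 \<le> j" for j
    unfolding hank_minor_def using that
    by (subst \<alpha>_Suc, subst col_minor_unit_col0) (auto simp: X_def insert_index_def intro!: arg_cong[where f=det] eq_matI)
  moreover have "det (ins_col (\<alpha>-1) ?W 0 (\<lambda>i. X i 0)) = cdet r1 (\<alpha>-2) (int \<alpha> - int k - 1) n"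
  proof -
    have "\<alpha> - 1 = Suc (\<alpha> - 2)" using \<alpha>2 by simp
    then show ?thesis
      unfolding cdet_as_sub_minor by (simp add: X_def det_ins_col_unit)
  qed
  moreover have "(\<lambda>i. X i k) = (\<lambda>i. hank r1 \<alpha> n i k)" "(\<lambda>i. X i \<alpha>) = (\<lambda>i. hank r1 \<alpha> n i \<alpha>)"
    using k_pos \<alpha>2 by (auto simp: X_def)
  ultimately show ?thesis
    unfolding rdet_as_bordered_det cdet_as_bordered_det rdet_succ_as_hank_minor
    using k_pos \<alpha>2 by simp
qed

text \<open>Eliminating the auxiliary minor \<open>hank_minor r1 \<alpha> n k\<close> from the two relations.\<close>

lemma cdet_recurrence_interior:
  "rdet r1 (\<alpha>-1) n * rdet r1 (\<alpha>-1) (n+1) * cdet r1 \<alpha> (int \<alpha> - int k) n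
   = rdet r1 \<alpha> n * rdet r1 (\<alpha>-1) (n+1) * cdet r1 (\<alpha>-1) (int \<alpha> - int k) n
   + rdet r1 (\<alpha>-1) n * rdet r1 \<alpha> (n+1) * cdet r1 (\<alpha>-1) (int \<alpha> - int k - 1) n
   + rdet r1 \<alpha> n * rdet r1 \<alpha> (n+1) * cdet r1 (\<alpha>-2) (int \<alpha> - int k - 1) n"
proof -
  have eliminate: "f*e*K = A*e*d + f*Z*c + A*Z*D"
    if "Z*c - K*e + A*a = 0" "Z*D - a*f + e*d = 0" for Z c K e A a D f d :: 'a
  proof -
    have "f*e*K - (A*e*d + f*Z*c + A*Z*D) = - f*(Z*c - K*e + A*a) - A*(Z*D - a*f + e*d)"
      by (simp add: algebra_simps)
    then show ?thesis using that by simp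
  qed
  show ?thesis by (rule eliminate[OF relation_shifted_rows relation_bordered])
qed

end

lemma cdet_zero_index: "cdet r1 \<alpha> 0 n = rdet r1 \<alpha> n"
  using cdet_as_col_minor[of \<alpha> \<alpha> r1 n] rdet_as_col_minor[of \<alpha> r1 n]
  by (cases "\<alpha> = 0") (simp_all add: cdet_def rdet_def)

lemma cdet_full_index: "cdet r1 \<alpha> (int \<alpha>) n = rdet r1 \<alpha> (n+1)"
  using cdet_as_col_minor[of \<alpha> 0 r1 n] rdet_succ_as_col_minor[of \<alpha> r1 n]
  by (cases "\<alpha> = 0") (simp_all add: cdet_def rdet_def)

lemma cdet_out_of_range: "m < 0 \<or> int \<alpha> < m \<Longrightarrow> cdet r1 \<alpha> m n = 0"
  by (auto simp: cdet_def)

lemma cdet_recurrence: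
  fixes r1 :: "int \<Rightarrow> 'a::field"
  assumes \<alpha>2: "2 \<le> \<alpha>" and m: "0 \<le> m" "m \<le> int \<alpha>"
  shows "rdet r1 (\<alpha>-1) n * rdet r1 (\<alpha>-1) (n+1) * cdet r1 \<alpha> m n
   = rdet r1 \<alpha> n * rdet r1 (\<alpha>-1) (n+1) * cdet r1 (\<alpha>-1) m n
   + rdet r1 (\<alpha>-1) n * rdet r1 \<alpha> (n+1) * cdet r1 (\<alpha>-1) (m-1) n
   + rdet r1 \<alpha> n * rdet r1 \<alpha> (n+1) * cdet r1 (\<alpha>-2) (m-1) n"
proof -
  consider "m = 0" | "m = int \<alpha>" | "0 < m" "m < int \<alpha>" using m by linarith
  then show ?thesis
  proof cases
    case 1
    then show ?thesis by (simp add: cdet_zero_index cdet_out_of_range)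
  next
    case 2
    have "cdet r1 (\<alpha>-1) (m-1) n = rdet r1 (\<alpha>-1) (n+1)"
      using cdet_full_index[of r1 "\<alpha>-1" n] 2 \<alpha>2 by (simp add: of_nat_diff)
    then show ?thesis using 2 \<alpha>2 by (simp add: cdet_full_index cdet_out_of_range)
  next
    case 3
    define k where "k = \<alpha> - nat m"
    have "1 \<le> k" "k < \<alpha>" "m = int \<alpha> - int k" using 3 unfolding k_def by auto
    then show ?thesis using cdet_recurrence_interior[OF \<alpha>2] by simp
  qed
qed

lemma yw_odd: "1 \<le> \<alpha> \<Longrightarrow> yw r1 (2*\<alpha> - 1) n = vq r1 \<alpha> (n+1) / vq r1 \<alpha> n"
  by (simp add: yw_def)

lemma yw_even: "1 \<le> \<alpha> \<Longrightarrow> yw r1 (2*\<alpha> - 2) n = vq r1 \<alpha> (n+1) / vq r1 (\<alpha>-1) n"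
proof -
  assume "1 \<le> \<alpha>"
  then have "even (2*\<alpha> - 2)" "(2*\<alpha> - 2) div 2 = \<alpha> - 1" by auto
  then show ?thesis using \<open>1 \<le> \<alpha>\<close> by (simp add: yw_def)
qed

text \<open>The product \<open>v\<^sub>1 \<cdots> v\<^sub>\<alpha>\<close> telescopes, so C is c divided by r.\<close>

lemma prod_vq:
  assumes nz: "\<And>a. rdet r1 a n \<noteq> 0"
  shows "(\<Prod>k=1..\<alpha>. vq r1 k n) = rdet r1 \<alpha> n"
proof (induction \<alpha>)
  case 0
  then show ?case by (simp add: rdet_def)
next
  case (Suc a)
  have "(\<Prod>k=1..Suc a. vq r1 k n) = vq r1 (Suc a) n * (\<Prod>k=1..a. vq r1 k n)"
    by (subst prod.nat_ivl_Suc') auto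
  then show ?case using Suc nz[of a] by (simp add: vq_def)
qed

lemma Cn_as_ratio:
  assumes "\<And>a. rdet r1 a n \<noteq> 0"
  shows "Cn r1 \<alpha> m n = cdet r1 \<alpha> m n / rdet r1 \<alpha> n"
  unfolding Cn_def prod_vq[OF assms] ..

theorem mainTheorem5:
  fixes r1 :: "int \<Rightarrow> 'a::field"
  assumes nz: "\<And>\<alpha> n. \<alpha> \<ge> 1 \<Longrightarrow> rdet r1 \<alpha> n \<noteq> 0"
  shows "(\<forall>\<alpha>::nat. \<forall>m::int. \<forall>n::int. \<alpha> \<ge> 2 \<longrightarrow> 0 \<le> m \<longrightarrow> m \<le> int \<alpha> \<longrightarrow>
            Cn r1 \<alpha> m n = Cn r1 (\<alpha> - 1) m n
              + yw r1 (2*\<alpha> - 1) n * Cn r1 (\<alpha> - 1) (m - 1) n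
              + yw r1 (2*\<alpha> - 2) n * Cn r1 (\<alpha> - 2) (m - 1) n)
       \<and> (\<forall>\<alpha>::nat. \<forall>n::int. Cn r1 \<alpha> 0 n = 1)"
proof -
  have nz_all: "rdet r1 a q \<noteq> 0" for a q
    using nz[of a q] by (cases "a = 0") (auto simp: rdet_def)
  note ratio = Cn_as_ratio[OF nz_all]
  have "Cn r1 \<alpha> m n = Cn r1 (\<alpha> - 1) m n
              + yw r1 (2*\<alpha> - 1) n * Cn r1 (\<alpha> - 1) (m - 1) n
              + yw r1 (2*\<alpha> - 2) n * Cn r1 (\<alpha> - 2) (m - 1) n"
    if "2 \<le> \<alpha>" "0 \<le> m" "m \<le> int \<alpha>" for \<alpha> m n
  proof -
    have "1 \<le> \<alpha>" "\<alpha> - 1 - 1 = \<alpha> - 2" using that by auto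
    then show ?thesis
      using cdet_recurrence[OF that, of r1 n] nz_all[of \<alpha>] nz_all[of "\<alpha> - 1"] nz_all[of "\<alpha> - 2"]
      unfolding ratio yw_odd[OF \<open>1 \<le> \<alpha>\<close>] yw_even[OF \<open>1 \<le> \<alpha>\<close>] vq_def by (simp add: field_simps)
  qed
  moreover have "Cn r1 \<alpha> 0 n = 1" for \<alpha> n
    using nz_all[of \<alpha> n] unfolding ratio cdet_zero_index by simp
  ultimately show ?thesis by blast
qed

end
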